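(* Let $\mathbf{f}$ be the Fibonacci word. For every index $x\ge0$ of $\mathbf{f}$ and every positive integer $n$, there is a $\lfloor F_n\frac{\sqrt5}{2}\rfloor$-antipower with block length $2F_n$ starting at position $x$ of $\mathbf{f}$.
   Context: The Fibonacci word is $\mathbf{f}=\sigma^{\omega}(0)=0100101001001\cdots$, the fixed point of the morphism $\sigma(0)=01$, $\sigma(1)=0$; it is $0$-indexed. $F_1=F_2=1$, $F_n=F_{n-1}+F_{n-2}$. A $k$-antipower is a word that is the concatenation of $k$ pairwise distinct words (blocks) of equal length; that common length is the block length. *)

theory Defs
  imports Complex_Main "HOL-Number_Theory.Fib"
begin

fun fmorph :: "nat \<Rightarrow> nat list" where
  "fmorph a = (if a = 0 then [0, 1] else [0])"

definition fsigma :: "nat list \<Rightarrow> nat list" where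
  "fsigma w = concat (map fmorph w)"

text \<open>The infinite Fibonacci word (0-indexed): the fixed point of sigma starting with 0.
  The prefix (fsigma ^^ (i+1)) [0] has length at least i+1 (it is F_(i+3)), and
  each such prefix is a prefix of the next one, so this picks letter i of the limit.\<close>
definition fibword :: "nat \<Rightarrow> nat" where
  "fibword i = ((fsigma ^^ (Suc i)) [0]) ! i"

definition factor :: "(nat \<Rightarrow> 'a) \<Rightarrow> nat \<Rightarrow> nat \<Rightarrow> 'a list" where
  "factor w x m = map w [x..<x + m]"

definition antipower_at :: "(nat \<Rightarrow> 'a) \<Rightarrow> nat \<Rightarrow> nat \<Rightarrow> nat \<Rightarrow> bool" where
  "antipower_at w x k b \<longleftrightarrow>
     (\<forall>i<k. \<forall>j<k. i \<noteq> j \<longrightarrow> factor w (x + i * b) b \<noteq> factor w (x + j * b) b)"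

end

(*
  The Fibonacci word is mechanical: with phi the golden ratio, letter i is 0 exactly when
  floor((i+2) phi) - floor((i+1) phi) = 2.  Hence equal factors of length m at positions y and z
  give floor(A + j phi) - floor(A) = floor(B + j phi) - floor(B) for all j <= m, where
  A = (y+1) phi and B = (z+1) phi: no point -j phi (mod 1) with j <= m separates A from B on the
  circle R/Z.  Two blocks of block length 2 F_n that are D blocks apart start 2 D F_n apart,
  and 2 D F_n phi lies at distance t = 2 D phi^(-n) from an integer.  The points j phi (mod 1)
  with j = s F_n + r F_(n+1) <= 2 F_n sit at r phi^(-n-1) - s phi^(-n) (up to sign), so they
  meet every arc of length phi^(-n) + phi^(-n-1); for 1 <= D <= F_n sqrt 5 / 2 - 1 both t and
  1 - t exceed this length, so such a point does separate A from B.
*)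

theory Submission
  imports Defs "HOL-Computational_Algebra.Primes"
begin

definition \<phi> :: real where "\<phi> = (1 + sqrt 5) / 2"
definition \<gamma> :: real where "\<gamma> = (sqrt 5 - 1) / 2"

lemma sqrt_5_irrational: "sqrt 5 \<notin> \<rat>"
proof
  assume "sqrt 5 \<in> \<rat>"
  then obtain m n :: nat where "n \<noteq> 0" "\<bar>sqrt (real 5)\<bar> = m / n" "coprime m n"
    by (metis Rats_abs_nat_div_natE of_nat_numeral)
  then have "real m = sqrt 5 * real n" by (simp add: field_simps)
  then have "real (m\<^sup>2) = (sqrt 5)\<^sup>2 * real (n\<^sup>2)"
    by (simp add: power_mult_distrib)
  then have "real (m\<^sup>2) = 5 * real (n\<^sup>2)" by simp
  then have "real (m\<^sup>2) = real (5 * n\<^sup>2)" by simp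
  then have eq: "m\<^sup>2 = 5 * n\<^sup>2" by (simp only: of_nat_eq_iff)
  have prime5: "prime (5::nat)" by simp
  from eq have "5 dvd m\<^sup>2" by simp
  with prime5 have "5 dvd m" using prime_dvd_power by blast
  then obtain k where "m = 5 * k" ..
  with eq have "n\<^sup>2 = 5 * k\<^sup>2" by (simp add: power2_eq_square)
  then have "5 dvd n\<^sup>2" by simp
  with prime5 have "5 dvd n" using prime_dvd_power by blast
  with \<open>5 dvd m\<close> have "5 dvd gcd m n" by simp
  with \<open>coprime m n\<close> show False by simp
qed

lemma golden_identities:
  "\<phi> = 1 + \<gamma>" "\<phi> * \<gamma> = 1" "\<gamma> * \<gamma> = 1 - \<gamma>"
  by (simp_all add: \<phi>_def \<gamma>_def field_simps)

lemma golden_bounds: "0 < \<gamma>" "\<gamma> < 1" "1 < 2 * \<gamma>"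
proof -
  have "2 < sqrt (5::real)" "sqrt (5::real) < 3"
    by (simp_all add: real_less_rsqrt real_less_lsqrt)
  then show "0 < \<gamma>" "\<gamma> < 1" "1 < 2 * \<gamma>"
    by (simp_all add: \<gamma>_def)
qed

lemma of_nat_mult_phi_not_int:
  assumes "0 < m"
  shows "real m * \<phi> \<noteq> of_int N"
proof
  assume "real m * \<phi> = of_int N"
  then have "sqrt 5 = (2 * of_int N - real m) / real m"
    using assms by (simp add: \<phi>_def field_simps)
  also have "\<dots> \<in> \<rat>" by simp
  finally show False using sqrt_5_irrational by simp
qed

section \<open>The Beatty sequence of the golden ratio\<close>

definition wythoff :: "nat \<Rightarrow> int" where
  "wythoff j = \<lfloor>real j * \<phi>\<rfloor>"

lemma wythoff_eq_add_floor: "wythoff j = int j + \<lfloor>real j * \<gamma>\<rfloor>"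
proof -
  have "real j * \<phi> = of_int (int j) + real j * \<gamma>"
    by (simp add: golden_identities(1) algebra_simps)
  then show ?thesis
    unfolding wythoff_def by (metis floor_add_int add.commute)
qed

lemma wythoff_less_mult_phi:
  assumes "0 < j"
  shows "of_int (wythoff j) < real j * \<phi>"
  using of_nat_mult_phi_not_int[OF assms, of "wythoff j"] of_int_floor_le[of "real j * \<phi>"]
  unfolding wythoff_def by linarith

lemma mult_phi_less_wythoff_add_1: "real j * \<phi> < of_int (wythoff j) + 1"
  unfolding wythoff_def by linarith

lemma wythoff_Suc_diff: "wythoff (Suc j) - wythoff j \<in> {1, 2}"
proof -
  have "real (Suc j) * \<phi> = real j * \<phi> + 1 + \<gamma>"
    by (simp add: golden_identities(1) algebra_simps)
  then have "wythoff j + 1 \<le> wythoff (Suc j)" "wythoff (Suc j) \<le> wythoff j + 2"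
    unfolding wythoff_def using golden_bounds by linarith+
  then show ?thesis by auto
qed

lemma wythoff_ge_self: "int j \<le> wythoff j"
  using golden_bounds by (simp add: wythoff_eq_add_floor)

lemma wythoff_1: "wythoff 1 = 1"
  using golden_bounds by (simp add: wythoff_eq_add_floor floor_eq_iff)

lemma wythoff_2: "wythoff 2 = 3"
  using golden_bounds by (simp add: wythoff_eq_add_floor floor_eq_iff)

lemma wythoff_ge:
  assumes "2 \<le> j"
  shows "int j + 1 \<le> wythoff j"
proof -
  have "1 \<le> 2 * \<gamma>" using golden_bounds by simp
  also have "\<dots> \<le> real j * \<gamma>" using assms golden_bounds by (simp add: mult_right_mono)
  finally show ?thesis by (simp add: wythoff_eq_add_floor le_floor_iff)
qed

text \<open>These identities are what makes the Fibonacci morphism map the mechanical word below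
  onto itself.\<close>
lemma wythoff_wythoff:
  assumes "0 < n"
  defines "N \<equiv> nat (wythoff n)"
  shows "wythoff N = int N + int n - 1"
    and "wythoff (N + 1) = int N + int n + 1"
    and "wythoff (n + 1) = int N + 2 \<Longrightarrow> wythoff (N + 2) = int N + int n + 2"
proof -
  have N: "real N < real n * \<phi>" "real n * \<phi> < real N + 1"
    using wythoff_less_mult_phi[OF assms(1)] mult_phi_less_wythoff_add_1[of n] wythoff_ge_self[of n]
    by (simp_all add: N_def)
  have scale: "(real j * \<phi>) * \<gamma> = real j" for j
    by (simp add: golden_identities(2) mult.assoc)
  have "real n < (real N + 1) * \<gamma>"
    using mult_strict_right_mono[OF N(2) golden_bounds(1)] unfolding scale .
  then have lo: "real n - \<gamma> < real N * \<gamma>" by (simp add: algebra_simps)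
  have hi: "real N * \<gamma> < real n"
    using mult_strict_right_mono[OF N(1) golden_bounds(1)] unfolding scale .
  show "wythoff N = int N + int n - 1"
    using lo hi golden_bounds by (simp add: wythoff_eq_add_floor floor_eq_iff)
  show "wythoff (N + 1) = int N + int n + 1"
    using lo hi golden_bounds by (simp add: wythoff_eq_add_floor floor_eq_iff algebra_simps)
  assume "wythoff (n + 1) = int N + 2"
  then have "real N + 2 < real (n + 1) * \<phi>"
    using wythoff_less_mult_phi[of "n + 1"] by simp
  from mult_strict_right_mono[OF this golden_bounds(1)]
  have "(real N + 2) * \<gamma> < real (n + 1)"
    unfolding scale .
  then show "wythoff (N + 2) = int N + int n + 2"
    using lo golden_bounds by (simp add: wythoff_eq_add_floor floor_eq_iff algebra_simps)
qed

section \<open>The Fibonacci word as a mechanical word\<close>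

definition fib_sturmian :: "nat \<Rightarrow> nat" where
  "fib_sturmian i = (if wythoff (i + 2) - wythoff (i + 1) = 2 then 0 else 1)"

lemma wythoff_diff_fib_sturmian:
  "wythoff (i + 2) - wythoff (i + 1) = 2 - int (fib_sturmian i)"
  using wythoff_Suc_diff[of "i + 1"] by (auto simp: fib_sturmian_def)

lemma fsigma_append: "fsigma (xs @ ys) = fsigma xs @ fsigma ys"
  by (simp add: fsigma_def)

lemma fsigma_singleton: "fsigma [a] = fmorph a"
  by (simp add: fsigma_def)

lemma fsigma_fib_sturmian_prefix:
  "fsigma (map fib_sturmian [0..<L]) = map fib_sturmian [0..<nat (wythoff (L + 1)) - 1]"
proof (induction L)
  case 0
  then show ?case using wythoff_1 by (simp add: fsigma_def)
next
  case (Suc L)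
  define N where "N = nat (wythoff (L + 1))"
  have N: "wythoff (L + 1) = int N" "L + 1 \<le> N"
    using wythoff_ge_self[of "L + 1"] unfolding N_def by linarith+
  have "wythoff N = int N + int L"
    using wythoff_wythoff(1)[of "L + 1"] unfolding N_def by simp
  moreover have "wythoff (N + 1) = int N + int L + 2"
    using wythoff_wythoff(2)[of "L + 1"] unfolding N_def by simp
  ultimately have last_0: "fib_sturmian (N - 1) = 0"
    using N(2) by (simp add: fib_sturmian_def)
  have IH: "fsigma (map fib_sturmian [0..<Suc L])
      = map fib_sturmian [0..<N - 1] @ fmorph (fib_sturmian L)"
    using Suc.IH by (simp add: fsigma_append fsigma_singleton N_def)
  show ?case
  proof (cases "fib_sturmian L = 0")
    case True
    then have next_N: "wythoff (L + 2) = int N + 2"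
      using wythoff_diff_fib_sturmian[of L] N(1) by simp
    then have "wythoff (N + 2) = int N + int L + 3"
      using wythoff_wythoff(3)[of "L + 1"] by (simp add: N_def)
    then have "fib_sturmian N = 1"
      using \<open>wythoff (N + 1) = int N + int L + 2\<close> wythoff_diff_fib_sturmian[of N] by simp
    then have "fsigma (map fib_sturmian [0..<Suc L]) = map fib_sturmian [0..<Suc N]"
      using IH True last_0 N(2) by (cases N) auto
    also have "Suc N = nat (wythoff (Suc L + 1)) - 1"
      using next_N by simp
    finally show ?thesis .
  next
    case False
    then have "fib_sturmian L = 1" by (simp add: fib_sturmian_def split: if_splits)
    then have next_N: "wythoff (L + 2) = int N + 1"
      using wythoff_diff_fib_sturmian[of L] N(1) by simp
    have "fsigma (map fib_sturmian [0..<Suc L]) = map fib_sturmian [0..<N]"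
      using IH \<open>fib_sturmian L = 1\<close> last_0 N(2) by (cases N) auto
    also have "N = nat (wythoff (Suc L + 1)) - 1"
      using next_N by simp
    finally show ?thesis .
  qed
qed

lemma fsigma_power_prefix: "\<exists>m > k. (fsigma ^^ k) [0] = map fib_sturmian [0..<m]"
proof (induction k)
  case 0
  have "fib_sturmian 0 = 0"
    using wythoff_1 wythoff_2 by (simp add: fib_sturmian_def numeral_2_eq_2)
  then show ?case by (intro exI[of _ 1]) simp
next
  case (Suc k)
  then obtain m where "k < m" "(fsigma ^^ k) [0] = map fib_sturmian [0..<m]" by blast
  moreover have "m < nat (wythoff (m + 1)) - 1"
    using wythoff_ge[of "m + 1"] \<open>k < m\<close> by simp
  ultimately show ?case
    by (intro exI[of _ "nat (wythoff (m + 1)) - 1"]) (simp add: fsigma_fib_sturmian_prefix)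
qed

lemma fibword_eq_fib_sturmian: "fibword i = fib_sturmian i"
proof -
  obtain m where "Suc i < m" "(fsigma ^^ Suc i) [0] = map fib_sturmian [0..<m]"
    using fsigma_power_prefix by blast
  then show ?thesis by (simp add: fibword_def)
qed

lemma wythoff_diff_eq_sum:
  "wythoff (x + 1 + j) - wythoff (x + 1) = 2 * int j - (\<Sum>l<j. int (fibword (x + l)))"
proof (induction j)
  case (Suc j)
  then show ?case
    using wythoff_diff_fib_sturmian[of "x + j"] by (simp add: fibword_eq_fib_sturmian algebra_simps)
qed simp

lemma factor_eq_imp_wythoff_diff_eq:
  assumes "factor fibword y m = factor fibword z m" "j \<le> m"
  shows "wythoff (y + 1 + j) - wythoff (y + 1) = wythoff (z + 1 + j) - wythoff (z + 1)"
proof -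
  have "fibword (y + l) = fibword (z + l)" if "l < j" for l
    using arg_cong[OF assms(1), of "\<lambda>w. w ! l"] that assms(2) by (simp add: factor_def)
  then have "(\<Sum>l<j. int (fibword (y + l))) = (\<Sum>l<j. int (fibword (z + l)))"
    by (intro sum.cong) auto
  then show ?thesis
    using wythoff_diff_eq_sum[of y j] wythoff_diff_eq_sum[of z j] by linarith
qed

section \<open>Multiples of the golden ratio modulo one\<close>

lemma fib_mult_phi: "real (fib n) * \<phi> = real (fib (Suc n)) - (- \<gamma>) ^ n"
proof (induction n rule: fib.induct)
  case (3 n)
  have "(- \<gamma>) ^ Suc (Suc n) = (- \<gamma>) ^ n * (\<gamma> * \<gamma>)"
    by (simp add: algebra_simps)
  also have "\<dots> = (- \<gamma>) ^ n + (- \<gamma>) ^ Suc n"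
    by (simp add: golden_identities(3) algebra_simps)
  finally show ?case using 3 by (simp add: algebra_simps)
qed (simp_all add: golden_identities(1))

lemma fib_mult_sqrt_5: "real (fib n) * sqrt 5 = \<phi> ^ n - (- \<gamma>) ^ n"
proof -
  have "(1 - sqrt 5) / 2 = - \<gamma>" by (simp add: \<gamma>_def field_simps)
  then show ?thesis using fib_closed_form[of n] by (simp add: \<phi>_def)
qed

definition multiples_dense :: "real \<Rightarrow> nat \<Rightarrow> real \<Rightarrow> bool" where
  "multiples_dense \<alpha> m L \<longleftrightarrow>
     (\<forall>c. \<exists>j\<le>m. \<exists>K::int. c < real j * \<alpha> - of_int K \<and> real j * \<alpha> - of_int K < c + L)"

lemma int_crossing:
  fixes V :: "int \<Rightarrow> real"
  assumes "a \<le> b" "V a \<le> c" "c < V b"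
  shows "\<exists>r. V r \<le> c \<and> c < V (r + 1)"
proof -
  obtain k where "\<not> c < V (a + int k)" "c < V (a + int (Suc k))"
    using ex_least_nat_less[of "\<lambda>k. c < V (a + int k)" "nat (b - a)"] assms by auto
  then show ?thesis by (intro exI[of _ "a + int k"]) (simp add: ac_simps)
qed

lemma mult_Suc_div_le:
  fixes p q r :: int
  assumes "0 < p" "q < 2 * p"
  shows "(r + 1) * q div p \<le> r * q div p + 2"
proof -
  define M where "M = r * q div p"
  define D where "D = (r + 1) * q div p"
  have "r * q = M * p + r * q mod p" "r * q mod p < p"
    using assms(1) by (simp_all add: M_def)
  moreover have "r * q + q = D * p + (r + 1) * q mod p" "0 \<le> (r + 1) * q mod p"
    using assms(1) by (simp_all add: D_def algebra_simps)
  ultimately have "D * p < (M + 3) * p"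
    unfolding distrib_right using assms(2) by linarith
  then show ?thesis
    using assms(1) by (simp add: M_def D_def mult_less_cancel_right)
qed

lemma lattice_values_dense:
  fixes p q :: int and u v L c :: real
  assumes pq: "0 < p" "0 \<le> q" "q < 2 * p" and uv: "0 < u" "0 < v" "u + v < L"
  shows "\<exists>s r. 0 \<le> s * p + r * q \<and> s * p + r * q \<le> 2 * p \<and>
    c < of_int r * v - of_int s * u \<and> of_int r * v - of_int s * u < c + L"
proof -
  \<comment> \<open>For each \<open>r\<close> the admissible \<open>s\<close> include \<open>- (r q div p)\<close> and \<open>1 - (r q div p)\<close>, with
    values \<open>V r\<close> and \<open>V r - u\<close>; along \<open>r\<close> these values leave no gap longer than \<open>u + v\<close>.\<close>
  define V where "V r = of_int (r * q div p) * u + of_int r * v" for r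
  have witness: "\<exists>s. 0 \<le> s * p + r * q \<and> s * p + r * q \<le> 2 * p \<and>
      of_int r * v - of_int s * u = V r - real k * u" if "k \<le> 1" for r k
  proof (intro exI conjI)
    define s where "s = int k - r * q div p"
    have "s * p + r * q = int k * p + r * q mod p"
      by (simp add: s_def left_diff_distrib minus_div_mult_eq_mod)
    moreover have "0 \<le> r * q mod p" "r * q mod p < p" "0 \<le> int k * p" "int k * p \<le> p"
      using pq(1) that mult_right_mono[of "int k" 1 p] by simp_all
    ultimately show "0 \<le> s * p + r * q" "s * p + r * q \<le> 2 * p"
      by linarith+
    show "of_int r * v - of_int s * u = V r - real k * u"
      by (simp add: s_def V_def algebra_simps)
  qed
  have V_step: "V (r + 1) \<le> V r + 2 * u + v" for r
  proof -
    have "real_of_int ((r + 1) * q div p) \<le> real_of_int (r * q div p + 2)"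
      using mult_Suc_div_le[OF pq(1,3), of r] by (simp only: of_int_le_iff)
    then have "real_of_int ((r + 1) * q div p) * u \<le> (real_of_int (r * q div p) + 2) * u"
      using uv(1) by (simp add: mult_right_mono)
    then show ?thesis by (simp add: V_def algebra_simps)
  qed
  obtain N :: nat where N: "\<bar>c\<bar> < real N * v"
    using ex_less_of_nat_mult[OF uv(2)] by blast
  have "V (- int N) \<le> c" "c < V (int N)"
  proof -
    have "- int N * q div p \<le> 0" "0 \<le> int N * q div p"
      using pq by (simp_all add: div_nonpos_pos_le0 mult_nonpos_nonneg pos_imp_zdiv_nonneg_iff)
    then have "of_int (- int N * q div p) * u \<le> 0" "0 \<le> of_int (int N * q div p) * u"
      using uv(1) by (simp_all add: mult_nonpos_nonneg)
    then show "V (- int N) \<le> c" "c < V (int N)"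
      using N unfolding V_def by linarith+
  qed
  then obtain r where r: "V r \<le> c" "c < V (r + 1)"
    using int_crossing[of "- int N" "int N" V c] by auto
  consider "c < V (r + 1) - u" | "V (r + 1) - u \<le> c" by linarith
  then obtain k :: nat where "k \<le> 1" "c < V (r + 1) - real k * u" "V (r + 1) - real k * u < c + L"
  proof cases
    case 1
    then show ?thesis using that[of 1] r(1) V_step[of r] uv by simp
  next
    case 2
    then show ?thesis using that[of 0] r(2) uv by simp
  qed
  with witness[of k "r + 1"] show ?thesis by metis
qed

lemma fib_Suc_less_double:
  assumes "3 \<le> n"
  shows "fib (Suc n) < 2 * fib n"
proof -
  define m where "m = n - 3"
  have m: "n = Suc (Suc (Suc m))"
    using assms by (simp add: m_def)
  have "0 < fib (Suc m)" by (simp add: fib_neq_0_nat)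
  then show ?thesis unfolding m by simp
qed

lemma multiples_dense_phi_fib:
  assumes "3 \<le> n" "\<gamma> ^ n + \<gamma> ^ Suc n < L"
  shows "multiples_dense \<phi> (2 * fib n) L"
  unfolding multiples_dense_def
proof
  fix c
  define p where "p = int (fib n)"
  define q where "q = int (fib (Suc n))"
  have pq: "0 < p" "0 \<le> q" "q < 2 * p"
    using fib_neq_0_nat[of n] fib_Suc_less_double[OF assms(1)] assms(1)
    by (simp_all add: p_def q_def)
  have uv: "0 < \<gamma> ^ n" "0 < \<gamma> ^ Suc n" using golden_bounds by simp_all
  define sign where "sign = ((-1) ^ n :: real)"
  have frac: "of_int (s * p + r * q) * \<phi> - of_int (s * q + r * int (fib (Suc (Suc n))))
      = sign * (of_int r * \<gamma> ^ Suc n - of_int s * \<gamma> ^ n)" for s r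
  proof -
    have "of_int (s * p + r * q) * \<phi> - of_int (s * q + r * int (fib (Suc (Suc n))))
        = of_int s * (of_int p * \<phi> - of_int q)
          + of_int r * (of_int q * \<phi> - real (fib (Suc (Suc n))))"
      by (simp add: algebra_simps)
    also have "of_int p * \<phi> - of_int q = - ((- \<gamma>) ^ n)"
      using fib_mult_phi[of n] by (simp add: p_def q_def)
    also have "of_int q * \<phi> - real (fib (Suc (Suc n))) = - ((- \<gamma>) ^ Suc n)"
      using fib_mult_phi[of "Suc n"] by (simp add: q_def)
    finally show ?thesis
      by (simp add: sign_def power_minus[of \<gamma>] algebra_simps)
  qed
  obtain s r where sr: "0 \<le> s * p + r * q" "s * p + r * q \<le> 2 * p"
    "c < sign * (of_int r * \<gamma> ^ Suc n - of_int s * \<gamma> ^ n)"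
    "sign * (of_int r * \<gamma> ^ Suc n - of_int s * \<gamma> ^ n) < c + L"
  proof (cases "even n")
    case True
    then show ?thesis
      using that lattice_values_dense[OF pq uv assms(2), of c] by (auto simp: sign_def)
  next
    case False
    then show ?thesis
      using that lattice_values_dense[OF pq uv assms(2), of "- c - L"] by (auto simp: sign_def)
  qed
  define j where "j = nat (s * p + r * q)"
  have "real j = of_int (s * p + r * q)" using sr(1) by (simp add: j_def)
  moreover have "j \<le> 2 * fib n" using sr(2) by (simp add: j_def p_def)
  ultimately show "\<exists>j\<le>2 * fib n. \<exists>K::int.
      c < real j * \<phi> - of_int K \<and> real j * \<phi> - of_int K < c + L"
    using sr(3,4) frac[of s r] by metis
qed

section \<open>Separating factors of the Fibonacci word\<close>

lemma multiples_dense_pos: "multiples_dense \<alpha> m L \<Longrightarrow> 0 < L"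
  unfolding multiples_dense_def by (metis add.left_neutral less_trans)

lemma floor_diffs_separate_pos:
  assumes dense: "multiples_dense \<alpha> m L" and t: "0 < t" "L \<le> t" "L \<le> 1 - t"
  shows "\<exists>j\<le>m. \<lfloor>A + real j * \<alpha>\<rfloor> - \<lfloor>A\<rfloor> \<noteq> \<lfloor>A + t + real j * \<alpha>\<rfloor> - \<lfloor>A + t\<rfloor>"
proof (cases "\<lfloor>A + t\<rfloor> = \<lfloor>A\<rfloor>")
  case True
  obtain j and K :: int where jK: "j \<le> m" "- A - t < real j * \<alpha> - K" "real j * \<alpha> - K < - A - t + L"
    using dense unfolding multiples_dense_def by blast
  have "\<lfloor>A + real j * \<alpha>\<rfloor> < K" "K \<le> \<lfloor>A + t + real j * \<alpha>\<rfloor>"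
    using jK t(2) by linarith+
  with True have "\<lfloor>A + real j * \<alpha>\<rfloor> - \<lfloor>A\<rfloor> \<noteq> \<lfloor>A + t + real j * \<alpha>\<rfloor> - \<lfloor>A + t\<rfloor>"
    by linarith
  with jK(1) show ?thesis by blast
next
  case False
  then have step: "\<lfloor>A + t\<rfloor> = \<lfloor>A\<rfloor> + 1"
    using t(1,3) multiples_dense_pos[OF dense] by linarith
  obtain j and K :: int where jK: "j \<le> m" "- A < real j * \<alpha> - K" "real j * \<alpha> - K < - A + L"
    using dense unfolding multiples_dense_def by blast
  have "K \<le> \<lfloor>A + real j * \<alpha>\<rfloor>" "\<lfloor>A + t + real j * \<alpha>\<rfloor> \<le> K"
    using jK t(3) by linarith+
  with step have "\<lfloor>A + real j * \<alpha>\<rfloor> - \<lfloor>A\<rfloor> \<noteq> \<lfloor>A + t + real j * \<alpha>\<rfloor> - \<lfloor>A + t\<rfloor>"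
    by linarith
  with jK(1) show ?thesis by blast
qed

lemma floor_diffs_separate:
  assumes dense: "multiples_dense \<alpha> m L" and t: "L \<le> \<bar>t\<bar>" "L \<le> 1 - \<bar>t\<bar>"
  shows "\<exists>j\<le>m. \<lfloor>A + real j * \<alpha>\<rfloor> - \<lfloor>A\<rfloor> \<noteq> \<lfloor>A + t + real j * \<alpha>\<rfloor> - \<lfloor>A + t\<rfloor>"
proof (cases "0 < t")
  case True
  with floor_diffs_separate_pos[OF dense] t show ?thesis by simp
next
  case False
  with t multiples_dense_pos[OF dense]
  have "\<exists>j\<le>m. \<lfloor>(A + t) + real j * \<alpha>\<rfloor> - \<lfloor>A + t\<rfloor>
      \<noteq> \<lfloor>(A + t) + - t + real j * \<alpha>\<rfloor> - \<lfloor>(A + t) + - t\<rfloor>"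
    by (intro floor_diffs_separate_pos[OF dense]) linarith+
  then show ?thesis by (simp add: eq_commute)
qed

lemma fibword_factors_differ:
  assumes dense: "multiples_dense \<phi> m L"
    and shift: "real d * \<phi> = of_int C + t" and t: "L \<le> \<bar>t\<bar>" "L \<le> 1 - \<bar>t\<bar>"
  shows "factor fibword y m \<noteq> factor fibword (y + d) m"
proof
  assume eq: "factor fibword y m = factor fibword (y + d) m"
  define A where "A = real (y + 1) * \<phi>"
  have left: "wythoff (y + 1 + j) = \<lfloor>A + real j * \<phi>\<rfloor>" for j
    by (simp add: wythoff_def A_def algebra_simps)
  have right: "wythoff (y + d + 1 + j) = \<lfloor>A + t + real j * \<phi>\<rfloor> + C" for j
  proof -
    have "real (y + d + 1 + j) * \<phi> = A + t + real j * \<phi> + of_int C"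
      using shift by (simp add: A_def algebra_simps)
    then show ?thesis unfolding wythoff_def by simp
  qed
  have "\<lfloor>A + real j * \<phi>\<rfloor> - \<lfloor>A\<rfloor> = \<lfloor>A + t + real j * \<phi>\<rfloor> - \<lfloor>A + t\<rfloor>"
    if "j \<le> m" for j
    using factor_eq_imp_wythoff_diff_eq[OF eq that] left[of j] left[of 0] right[of j] right[of 0]
    by simp
  then show False
    using floor_diffs_separate[OF dense t, of A] by blast
qed

lemma golden_shift_bounds:
  assumes "3 \<le> n" "1 \<le> D" "real D + 1 \<le> real (fib n) * sqrt 5 / 2"
  shows "\<gamma> ^ n + \<gamma> ^ Suc n < 2 * real D * \<gamma> ^ n"
    and "2 * real D * \<gamma> ^ n < 1 - (\<gamma> ^ n + \<gamma> ^ Suc n)"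
proof -
  define y where "y = \<gamma> ^ n"
  have y: "0 < y" "y < \<gamma> * \<gamma>" "\<phi> ^ n * y = 1"
  proof -
    show "0 < y" using golden_bounds by (simp add: y_def)
    have "y \<le> \<gamma> ^ 3" using assms(1) golden_bounds by (simp add: y_def power_decreasing)
    also have "\<dots> < \<gamma> ^ 2" using golden_bounds by (simp add: power_strict_decreasing)
    finally show "y < \<gamma> * \<gamma>" by (simp add: power2_eq_square)
    show "\<phi> ^ n * y = 1" by (simp add: y_def golden_identities(2) flip: power_mult_distrib)
  qed
  have "\<gamma> ^ Suc n = y * \<gamma>" by (simp add: y_def)
  moreover have "y * \<gamma> < y" using y(1) golden_bounds by simp
  moreover have "2 * y \<le> 2 * real D * y"
    using assms(2) y(1) by (simp add: mult_right_mono)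
  ultimately have "y + \<gamma> ^ Suc n < 2 * real D * y" by linarith
  then show "\<gamma> ^ n + \<gamma> ^ Suc n < 2 * real D * \<gamma> ^ n" by (simp add: y_def)
  have "2 * real D \<le> \<phi> ^ n - (- \<gamma>) ^ n - 2"
    using assms(3) fib_mult_sqrt_5[of n] by simp
  then have "2 * real D * y \<le> (\<phi> ^ n - (- \<gamma>) ^ n - 2) * y"
    using y(1) by (simp add: mult_right_mono)
  also have "\<dots> = 1 - (- \<gamma>) ^ n * y - 2 * y"
    using y(3) by (simp add: algebra_simps)
  also have "\<dots> \<le> 1 + y * y - 2 * y"
    using golden_bounds by (cases "even n") (simp_all add: y_def power_minus[of \<gamma>])
  also have "\<dots> < 1 - (y + y * \<gamma>)"
  proof -
    have "y + \<gamma> < 1" using y(2) golden_identities(3) by linarith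
    then have "y * (y + \<gamma>) < y * 1" using y(1) by (rule mult_strict_left_mono)
    then show ?thesis by (simp add: algebra_simps)
  qed
  finally show "2 * real D * \<gamma> ^ n < 1 - (\<gamma> ^ n + \<gamma> ^ Suc n)"
    by (simp add: y_def mult.commute)
qed

lemma fibword_fib_blocks_differ:
  assumes "3 \<le> n" "1 \<le> D" "real D + 1 \<le> real (fib n) * sqrt 5 / 2"
  shows "factor fibword y (2 * fib n) \<noteq> factor fibword (y + D * (2 * fib n)) (2 * fib n)"
proof -
  define t where "t = - 2 * real D * (- \<gamma>) ^ n"
  have abs_t: "\<bar>t\<bar> = 2 * real D * \<gamma> ^ n"
    using golden_bounds by (simp add: t_def abs_mult power_abs)
  note bounds = golden_shift_bounds[OF assms, folded abs_t]
  have dense: "multiples_dense \<phi> (2 * fib n) (min \<bar>t\<bar> (1 - \<bar>t\<bar>))"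
    using multiples_dense_phi_fib[OF assms(1)] bounds by simp
  have "real (D * (2 * fib n)) * \<phi> = 2 * real D * (real (fib n) * \<phi>)"
    by simp
  also have "\<dots> = of_int (int (2 * D * fib (Suc n))) + t"
    unfolding fib_mult_phi by (simp add: t_def algebra_simps)
  finally have shift: "real (D * (2 * fib n)) * \<phi> = of_int (int (2 * D * fib (Suc n))) + t" .
  show ?thesis
    by (rule fibword_factors_differ[OF dense shift min.cobounded1 min.cobounded2])
qed

lemma fibword_antipower_fib:
  assumes "3 \<le> n"
  shows "antipower_at fibword x (nat \<lfloor>real (fib n) * sqrt 5 / 2\<rfloor>) (2 * fib n)"
proof -
  define k where "k = nat \<lfloor>real (fib n) * sqrt 5 / 2\<rfloor>"
  have "real k = of_int \<lfloor>real (fib n) * sqrt 5 / 2\<rfloor>"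
    unfolding k_def by (simp add: of_nat_nat)
  also have "\<dots> \<le> real (fib n) * sqrt 5 / 2"
    by (rule of_int_floor_le)
  finally have k: "real k \<le> real (fib n) * sqrt 5 / 2" .
  have "factor fibword (x + i * (2 * fib n)) (2 * fib n)
      \<noteq> factor fibword (x + j * (2 * fib n)) (2 * fib n)" if "i < j" "j < k" for i j
  proof -
    have "x + j * (2 * fib n) = x + i * (2 * fib n) + (j - i) * (2 * fib n)"
      using that(1) by (simp add: algebra_simps)
    moreover have "1 \<le> j - i" "real (j - i) + 1 \<le> real (fib n) * sqrt 5 / 2"
      using that k by simp_all
    ultimately show ?thesis
      by (metis fibword_fib_blocks_differ[OF assms])
  qed
  then show ?thesis
    unfolding antipower_at_def k_def[symmetric] by (metis linorder_neq_iff)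
qed

theorem proposition17:
  fixes x n :: nat
  assumes "n \<ge> 1"
  shows "antipower_at fibword x (nat \<lfloor>real (fib n) * sqrt 5 / 2\<rfloor>) (2 * fib n)"
proof (cases "3 \<le> n")
  case True
  then show ?thesis by (rule fibword_antipower_fib)
next
  case False
  with assms have "n = 1 \<or> n = 2" by linarith
  then have "fib n = 1" by auto
  moreover have "sqrt 5 < (4::real)"
    by (simp add: real_less_lsqrt)
  ultimately have "nat \<lfloor>real (fib n) * sqrt 5 / 2\<rfloor> \<le> 1"
    by (simp add: nat_le_iff floor_le_iff)
  then show ?thesis unfolding antipower_at_def by auto
qed

end
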